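(* Let $\beta$ be a real root of an irreducible quadratic polynomial with integer coefficients, and let $\beta'$ denote its other root (conjugate). Then $p_\beta(\alpha) < \infty$ for every $\alpha \in \mathbb{R}$ if and only if at least one of $\beta$ and $\beta'$ is greater than $1$.
   Context: For $\beta, \alpha \in \mathbb{C}$, the partition function $p_\beta(\alpha) \in \mathbb{Z}_{\geq 0} \cup \{\infty\}$ is the number of polynomials $f(x) \in \mathbb{Z}_{\geq 0}[x]$ (polynomials with non-negative integer coefficients) such that $f(\beta) = \alpha$, i.e. the number of ways to write $\alpha = a_j\beta^j + \dots + a_1\beta + a_0$ with non-negative integers $a_i$; it may be infinite. *)

theory Defs
  imports "HOL-Computational_Algebra.Polynomial" "HOL-Library.Extended_Nat" Complex_Main
begin

text \<open>Polynomials with non-negative integer coefficients are modelled as nat poly;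
  f(beta) is the evaluation of its image in complex poly.\<close>

definition partition_polys :: "complex \<Rightarrow> complex \<Rightarrow> nat poly set" where
  "partition_polys \<beta> \<alpha> = {f :: nat poly. poly (map_poly of_nat f) \<beta> = \<alpha>}"

definition partition_fn :: "complex \<Rightarrow> complex \<Rightarrow> enat" where
  "partition_fn \<beta> \<alpha> =
     (if finite (partition_polys \<beta> \<alpha>) then enat (card (partition_polys \<beta> \<alpha>)) else \<infinity>)"

end

theory Submission
  imports Defs
begin

(*
  If \<beta> > 1, a representation of \<alpha> has coefficients at most \<alpha> and degree below
  log_\<beta> \<alpha>, so there are finitely many. Since \<beta> is irrational, f(\<beta>) = g(\<beta>) for
  integer polynomials forces f(\<beta>') = g(\<beta>'), so for \<beta>' > 1 the same bound applies
  through the conjugate.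

  Conversely, let \<beta>, \<beta>' < 1 and choose m \<ge> 1 with \<beta>^m, \<beta>'^m < 1 and
  \<beta>^m + \<beta>'^m \<le> 1. Then \<beta>^m is a
  root of an integer quadratic Q(t) = A t^2 + B t + C with A > 0 and A + B, A + B + C \<ge> 0,
  so all coefficients of Q(t) (1 + t + ... + t^(n+1)) except the two lowest are non-negative.
  Raising those two to non-negative values by a fixed amount yields infinitely many
  representations of one and the same \<alpha> in base \<beta>^m, hence in base \<beta>.
*)

definition representations :: "real \<Rightarrow> real \<Rightarrow> nat poly set" where
  "representations x \<alpha> = {f. poly (map_poly of_nat f) x = \<alpha>}"

lemma poly_map_poly_of_nat_of_real:
  "poly (map_poly of_nat f) (of_real x) = of_real (poly (map_poly of_nat f) x)"
  by (simp add: poly_altdef degree_map_poly coeff_map_poly)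

lemma partition_polys_of_real:
  "partition_polys (of_real \<beta>) (of_real \<alpha>) = representations \<beta> \<alpha>"
  by (simp add: partition_polys_def representations_def poly_map_poly_of_nat_of_real)

lemma map_poly_of_int_add:
  "map_poly (of_int :: int \<Rightarrow> 'a::comm_ring_1) (p + q) = map_poly of_int p + map_poly of_int q"
  by (rule poly_eqI) (simp add: coeff_map_poly)

lemma map_poly_of_int_diff:
  "map_poly (of_int :: int \<Rightarrow> 'a::comm_ring_1) (p - q) = map_poly of_int p - map_poly of_int q"
  by (rule poly_eqI) (simp add: coeff_map_poly)

lemma map_poly_of_int_mult:
  "map_poly (of_int :: int \<Rightarrow> 'a::comm_ring_1) (p * q) = map_poly of_int p * map_poly of_int q"
  by (rule poly_eqI) (simp add: coeff_map_poly coeff_mult)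

lemma map_poly_of_nat_add:
  "map_poly (of_nat :: nat \<Rightarrow> 'a::comm_semiring_1) (p + q) = map_poly of_nat p + map_poly of_nat q"
  by (rule poly_eqI) (simp add: coeff_map_poly)

lemma map_poly_of_nat_sum:
  "map_poly (of_nat :: nat \<Rightarrow> 'a::comm_semiring_1) (\<Sum>i\<in>I. f i) = (\<Sum>i\<in>I. map_poly of_nat (f i))"
  by (induction I rule: infinite_finite_induct) (simp_all add: map_poly_of_nat_add)

lemma coeff_mult_power_le_poly:
  fixes x :: "'a::linordered_semidom"
  assumes "x \<ge> 0"
  shows "of_nat (coeff f i) * x ^ i \<le> poly (map_poly of_nat f) x"
proof (cases "i \<le> degree f")
  case True
  then show ?thesis
    using assms by (auto simp: poly_altdef degree_map_poly coeff_map_poly intro: member_le_sum)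
qed (use assms in \<open>simp add: coeff_eq_0 poly_altdef degree_map_poly coeff_map_poly sum_nonneg\<close>)

lemma finite_representations:
  assumes "x > 1"
  shows "finite (representations x \<alpha>)"
proof -
  obtain N where N: "\<alpha> < x ^ N"
    using real_arch_pow[OF assms] by blast
  define K where "K = nat \<lfloor>\<alpha>\<rfloor>"
  have "representations x \<alpha> \<subseteq> Poly ` {cs. set cs \<subseteq> {0..K} \<and> length cs = N}"
  proof
    fix f assume "f \<in> representations x \<alpha>"
    then have le: "real (coeff f i) * x ^ i \<le> \<alpha>" for i
      using coeff_mult_power_le_poly[of x f i] assms by (simp add: representations_def)
    have "coeff f i = 0" if "i \<ge> N" for i
    proof (rule ccontr)
      assume "coeff f i \<noteq> 0"
      then have "x ^ N \<le> real (coeff f i) * x ^ i"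
        using that assms power_increasing[of N i x]
        by (simp add: mult_le_cancel_right1 order_trans[OF _ mult_right_mono[of 1 "real (coeff f i)"]])
      with le[of i] N show False by simp
    qed
    then have "f = Poly (map (coeff f) [0..<N])"
      by (intro poly_eqI) (auto simp: nth_default_def)
    moreover have "coeff f i \<le> K" for i
    proof -
      have "real (coeff f i) \<le> real (coeff f i) * x ^ i"
        using assms by (simp add: mult_le_cancel_left1)
      with le[of i] show ?thesis
        unfolding K_def by linarith
    qed
    ultimately show "f \<in> Poly ` {cs. set cs \<subseteq> {0..K} \<and> length cs = N}"
      by (intro image_eqI[of _ _ "map (coeff f) [0..<N]"]) auto
  qed
  then show ?thesis
    by (rule finite_subset) (intro finite_imageI finite_lists_length_eq; simp)
qed

lemma quadratic_eq_pCons: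
  assumes "degree p = 2"
  shows "p = [:coeff p 0, coeff p 1, coeff p 2:]"
  using assms by (intro poly_eqI) (auto simp: coeff_pCons coeff_eq_0 numeral_2_eq_2 split: nat.split)

lemma poly_quadratic:
  fixes p :: "int poly" and x :: "'a::{comm_ring_1,ring_char_0}"
  assumes "degree p = 2"
  shows "poly (map_poly of_int p) x = of_int (coeff p 0) + of_int (coeff p 1) * x + of_int (coeff p 2) * x^2"
  using assms by (simp add: poly_altdef degree_map_poly coeff_map_poly eval_nat_numeral)

lemma linear_factor_of_rational_root:
  fixes a b c u v :: int
  assumes "v \<noteq> 0" and "coprime u v" and root: "a * u^2 + b * u * v + c * v^2 = 0"
  obtains s t where "[:c, b, a:] = [:-u, v:] * [:s, t:]"
proof -
  have "a * u^2 = v * (- b * u - c * v)"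
    using root by (simp add: algebra_simps power2_eq_square)
  then have "v dvd a * u^2"
    by simp
  with assms(2) obtain t where t: "a = v * t"
    by (auto simp: coprime_commute coprime_dvd_mult_left_iff elim: dvdE)
  have "v * (t * u^2 + b * u + c * v) = 0"
    using root t by (simp add: algebra_simps power2_eq_square)
  then have "t * u^2 + b * u + c * v = 0"
    using assms(1) by simp
  then have root': "u * (t * u + b) = - c * v"
    by (simp add: algebra_simps power2_eq_square add_eq_0_iff2)
  then have "v dvd u * (t * u + b)"
    by simp
  with assms(2) obtain s where s: "t * u + b = v * s"
    by (auto simp: coprime_commute coprime_dvd_mult_right_iff elim: dvdE)
  have "v * (c + u * s) = 0"
    using root' unfolding s by algebra
  with assms(1) have "c = - u * s"
    by (simp add: eq_neg_iff_add_eq_0)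
  with t s have "[:c, b, a:] = [:-u, v:] * [:s, t:]"
    by (simp add: algebra_simps)
  then show ?thesis
    by (rule that)
qed

lemma irreducible_quadratic_root_not_rational:
  fixes p :: "int poly" and x :: "'a::field_char_0"
  assumes "degree p = 2" and "irreducible p" and "poly (map_poly of_int p) x = 0"
  shows "x \<notin> \<rat>"
proof
  assume "x \<in> \<rat>"
  then obtain u v :: int where "v > 0" "coprime u v" and x: "x = of_int u / of_int v"
    by (rule Rats_cases')
  have "of_int (coeff p 0) + of_int (coeff p 1) * x + of_int (coeff p 2) * x^2 = 0"
    using assms(3) by (simp add: poly_quadratic[OF assms(1)])
  then have "of_int (coeff p 2 * u^2 + coeff p 1 * u * v + coeff p 0 * v^2) = (0 :: 'a)"
    using \<open>v > 0\<close> unfolding x by (simp add: field_simps power2_eq_square)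
  then have "coeff p 2 * u^2 + coeff p 1 * u * v + coeff p 0 * v^2 = 0"
    by (simp only: of_int_eq_0_iff)
  then obtain s t where "[:coeff p 0, coeff p 1, coeff p 2:] = [:-u, v:] * [:s, t:]"
    using linear_factor_of_rational_root[of v u] \<open>v > 0\<close> \<open>coprime u v\<close> by blast
  with quadratic_eq_pCons[OF assms(1)] have factor: "p = [:-u, v:] * [:s, t:]"
    by (rule trans)
  have "t \<noteq> 0"
  proof
    assume "t = 0"
    then have "degree p \<le> 1"
      using factor degree_mult_le[of "[:-u, v:]" "[:s, t:]"] by simp
    with assms(1) show False
      by simp
  qed
  moreover have "is_unit [:-u, v:] \<or> is_unit [:s, t:]"
    using assms(2) factor irreducibleD by blast
  ultimately show False
    using \<open>v > 0\<close> by (auto simp: is_unit_poly_iff)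
qed

(* The pseudo-remainder of h modulo p is linear and vanishes at the irrational x, hence is zero. *)

lemma int_poly_root_conjugate:
  fixes p h :: "int poly" and x y :: "'a::field_char_0"
  assumes deg: "degree p = 2" and "x \<notin> \<rat>"
    and px: "poly (map_poly of_int p) x = 0" and py: "poly (map_poly of_int p) y = 0"
    and hx: "poly (map_poly of_int h) x = 0"
  shows "poly (map_poly of_int h) y = 0"
proof -
  define r where "r = pseudo_mod h p"
  have "p \<noteq> 0"
    using deg by auto
  then obtain k q where "k \<noteq> 0" and division: "smult k h = p * q + r"
    using pseudo_mod(1) unfolding r_def by blast
  have "r = 0 \<or> degree r < 2"
    using pseudo_mod(2)[OF \<open>p \<noteq> 0\<close>] deg unfolding r_def by simp
  then have r: "r = [:coeff r 0, coeff r 1:]"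
    by (intro poly_eqI) (auto simp: coeff_pCons coeff_eq_0 split: nat.split)
  have eval: "of_int k * poly (map_poly of_int h) z =
      poly (map_poly of_int p) z * poly (map_poly of_int q) z + (of_int (coeff r 0) + of_int (coeff r 1) * z)"
    for z :: 'a
  proof -
    have "poly (map_poly of_int (smult k h)) z = poly (map_poly of_int (p * q + r)) z"
      using division by simp
    then show ?thesis
      by (subst (asm) r) (simp add: map_poly_smult map_poly_of_int_add map_poly_of_int_mult map_poly_pCons)
  qed
  have r_x: "of_int (coeff r 0) + of_int (coeff r 1) * x = 0"
    using eval[of x] px hx by simp
  have "coeff r 1 = 0"
  proof (rule ccontr)
    assume "coeff r 1 \<noteq> 0"
    with r_x have "x = - of_int (coeff r 0) / of_int (coeff r 1)"
      by (simp add: field_simps eq_neg_iff_add_eq_0 add.commute)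
    with \<open>x \<notin> \<rat>\<close> show False
      by simp
  qed
  with r_x have "coeff r 0 = 0"
    by simp
  with \<open>coeff r 1 = 0\<close> \<open>k \<noteq> 0\<close> show ?thesis
    using eval[of y] py by simp
qed

lemma finite_representations_of_conjugate:
  fixes p :: "int poly" and x y :: real
  assumes "degree p = 2" and "x \<notin> \<rat>"
    and "poly (map_poly of_int p) x = 0" and "poly (map_poly of_int p) y = 0" and "y > 1"
  shows "finite (representations x \<alpha>)"
proof (cases "representations x \<alpha> = {}")
  case False
  then obtain f0 where f0: "f0 \<in> representations x \<alpha>"
    by blast
  have "representations x \<alpha> \<subseteq> representations y (poly (map_poly of_nat f0) y)"
  proof
    fix f assume f: "f \<in> representations x \<alpha>"
    define h where "h = map_poly int f - map_poly int f0"
    have h: "poly (map_poly of_int h) z = poly (map_poly of_nat f) z - poly (map_poly of_nat f0) z"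
      for z :: real
      by (simp add: h_def map_poly_of_int_diff map_poly_map_poly o_def)
    have "poly (map_poly of_int h) x = 0"
      using f f0 by (simp add: h representations_def)
    then have "poly (map_poly of_int h) y = 0"
      using int_poly_root_conjugate assms(1-4) by blast
    then show "f \<in> representations y (poly (map_poly of_nat f0) y)"
      by (simp add: h representations_def)
  qed
  then show ?thesis
    using finite_representations[OF \<open>y > 1\<close>] by (rule finite_subset)
qed simp

lemma quadratic_vieta:
  fixes p :: "int poly" and x y :: "'a::field_char_0"
  assumes "degree p = 2" and "poly (map_poly of_int p) x = 0" and "poly (map_poly of_int p) y = 0"
    and "x \<noteq> y"
  shows "of_int (coeff p 1) = - of_int (coeff p 2) * (x + y)"
    and "of_int (coeff p 0) = of_int (coeff p 2) * x * y"
proof -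
  have "(x - y) * (of_int (coeff p 2) * (x + y) + of_int (coeff p 1)) =
      poly (map_poly of_int p) x - poly (map_poly of_int p) y"
    by (simp add: poly_quadratic[OF assms(1)] algebra_simps power2_eq_square)
  with assms(2-4) show sum: "of_int (coeff p 1) = - of_int (coeff p 2) * (x + y)"
    by (simp add: eq_neg_iff_add_eq_0 add.commute)
  show "of_int (coeff p 0) = of_int (coeff p 2) * x * y"
    using assms(2) unfolding poly_quadratic[OF assms(1)] sum
    by (simp add: algebra_simps power2_eq_square eq_neg_iff_add_eq_0)
qed

lemma power_sum_mult_in_Ints:
  fixes x y :: "'a::comm_ring_1"
  assumes b: "of_int b = - of_int a * (x + y)" and c: "of_int c = of_int a * x * y"
  shows "of_int a ^ n * (x ^ n + y ^ n) \<in> \<int>"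
proof (induction n rule: induct_nat_012)
  case 0
  show ?case
    by simp
next
  case 1
  have "of_int a * (x + y) = - (of_int b :: 'a)"
    by (simp add: b)
  then show ?case
    by simp
next
  case (ge2 n)
  have "of_int a ^ Suc (Suc n) * (x ^ Suc (Suc n) + y ^ Suc (Suc n)) =
      - of_int b * (of_int a ^ Suc n * (x ^ Suc n + y ^ Suc n))
      - of_int a * of_int c * (of_int a ^ n * (x ^ n + y ^ n))"
    unfolding b c by (simp add: algebra_simps)
  then show ?case
    using ge2.IH by (simp add: Ints_diff Ints_mult)
qed

lemma exists_power_sum_le_1:
  fixes x y :: real
  assumes "x < 1" and "y < 1"
  obtains m where "m \<ge> 1" and "x ^ m < 1" and "y ^ m < 1" and "x ^ m + y ^ m \<le> 1"
proof (cases "x + y \<le> 1")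
  case True
  then show ?thesis
    using that[of 1] assms by simp
next
  case False
  with assms have "\<bar>x\<bar> < 1" and "\<bar>y\<bar> < 1"
    by linarith+
  then have "\<forall>\<^sub>F m in sequentially. x ^ m < 1/2" and "\<forall>\<^sub>F m in sequentially. y ^ m < 1/2"
    using order_tendstoD(2)[OF LIMSEQ_power_zero[of x], of "1/2"]
      order_tendstoD(2)[OF LIMSEQ_power_zero[of y], of "1/2"] by simp_all
  then have "\<forall>\<^sub>F m in sequentially. m \<ge> 1 \<and> x ^ m < 1/2 \<and> y ^ m < 1/2"
    using eventually_ge_at_top[of 1] by eventually_elim auto
  then show ?thesis
    using that by (auto simp: eventually_sequentially)
qed

lemma quadratic_mult_geometric_sum:
  fixes \<rho> A B C :: "'a::comm_ring_1"
  shows "(C + B * \<rho> + A * \<rho>^2) * (\<Sum>k\<le>n+1. \<rho>^k) =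
    C + (B + C) * \<rho> + (A + B + C) * (\<Sum>k=2..n+1. \<rho>^k) + (A + B) * \<rho>^(n+2) + A * \<rho>^(n+3)"
proof (induction n)
  case 0
  show ?case
    by (simp add: algebra_simps power2_eq_square power3_eq_cube)
next
  case (Suc n)
  have sums: "(\<Sum>k\<le>Suc n+1. \<rho>^k) = (\<Sum>k\<le>n+1. \<rho>^k) + \<rho>^(n+2)"
    "(\<Sum>k=2..Suc n+1. \<rho>^k) = (\<Sum>k=2..n+1. \<rho>^k) + \<rho>^(n+2)"
    by (simp_all add: sum.cl_ivl_Suc)
  define S T r where "S = (\<Sum>k\<le>n+1. \<rho>^k)" and "T = (\<Sum>k=2..n+1. \<rho>^k)" and "r = \<rho>^(n+2)"
  have powers: "\<rho>^(n+3) = r * \<rho>" "\<rho>^(Suc n+2) = r * \<rho>" "\<rho>^(Suc n+3) = r * \<rho> * \<rho>"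
    by (simp_all add: r_def eval_nat_numeral)
  have IH: "(C + B * \<rho> + A * \<rho>^2) * S = C + (B + C) * \<rho> + (A + B + C) * T + (A + B) * r + A * (r * \<rho>)"
    using Suc.IH unfolding powers(1) S_def[symmetric] T_def[symmetric] r_def[symmetric] .
  show ?case
    unfolding sums powers S_def[symmetric] T_def[symmetric] r_def[symmetric] distrib_left IH
    by (simp add: algebra_simps power2_eq_square)
qed

lemma infinite_representations_of_quadratic_root_power:
  fixes A B C :: int and x :: real
  assumes "A > 0" and "A + B \<ge> 0" and "A + B + C \<ge> 0" and "m \<ge> 1"
    and root: "of_int C + of_int B * x^m + of_int A * (x^m)^2 = 0"
  obtains \<alpha> where "infinite (representations x \<alpha>)"
proof -
  define \<rho> where "\<rho> = x^m"
  (* F n is (C + B t + A t^2) (1 + t + ... + t^(n+1)) in t = X^m, with its two lowest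
     coefficients C and B + C raised to non-negative values; the raise contributes \<alpha>. *)
  define F where "F n = monom (nat C) (m * 0) + monom (nat (B + C)) (m * 1)
    + (\<Sum>k=2..n+1. monom (nat (A + B + C)) (m * k)) + monom (nat (A + B)) (m * (n + 2))
    + monom (nat A) (m * (n + 3))" for n
  define \<alpha> where "\<alpha> = real (nat (- C)) + real (nat (- (B + C))) * \<rho>"
  have poly_monom_power: "poly (map_poly of_nat (monom c (m * k))) x = real c * \<rho>^k" for c k
    by (simp add: map_poly_monom poly_monom \<rho>_def power_mult)
  have nat_eq: "real (nat z) = of_int z + real (nat (- z))" for z
    by (cases "z \<ge> 0") simp_all
  have F_value: "poly (map_poly of_nat (F n)) x = \<alpha> +
      (of_int C + of_int B * \<rho> + of_int A * \<rho>^2) * (\<Sum>k\<le>n+1. \<rho>^k)" for n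
    unfolding F_def quadratic_mult_geometric_sum map_poly_of_nat_add map_poly_of_nat_sum
      poly_add poly_sum poly_monom_power
    using assms(1-3) by (simp add: \<alpha>_def sum_distrib_left nat_eq[of C] nat_eq[of "B + C"] sum.distrib algebra_simps)
  then have F_representation: "F n \<in> representations x \<alpha>" for n
    using F_value[of n] root by (simp add: representations_def \<rho>_def)
  have coeff_monom_power: "coeff (monom c (m * k)) (m * j) = (if k = j then c else 0)" for c k j
    using assms(4) by (simp add: coeff_monom)
  have "F n \<noteq> F n'" if "n < n'" for n n'
  proof -
    have "coeff (F n) (m * (n' + 3)) = 0" and "coeff (F n') (m * (n' + 3)) = nat A"
      using that unfolding F_def coeff_add coeff_sum coeff_monom_power by simp_all
    with assms(1) show ?thesis
      by auto
  qed
  then have "inj F"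
    by (rule linorder_injI)
  then have "infinite (range F)"
    by (rule range_inj_infinite)
  with F_representation have "infinite (representations x \<alpha>)"
    by (metis infinite_super image_subsetI)
  then show ?thesis
    by (rule that)
qed

lemma infinite_representations_if_conjugates_lt_1:
  fixes a b c :: int and x y :: real
  assumes "a \<noteq> 0" and b: "of_int b = - of_int a * (x + y)" and c: "of_int c = of_int a * x * y"
    and "x < 1" and "y < 1"
  obtains \<alpha> where "infinite (representations x \<alpha>)"
proof -
  obtain m where "m \<ge> 1" and "x ^ m < 1" and "y ^ m < 1" and "x ^ m + y ^ m \<le> 1"
    using exists_power_sum_le_1 assms(4,5) by blast
  obtain S where S: "of_int S = of_int a ^ m * (x ^ m + y ^ m)"
    using power_sum_mult_in_Ints[OF b c, of m] by (auto elim: Ints_cases)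
  define A B C where "A = a ^ (2 * m)" and "B = - (a ^ m * S)" and "C = a ^ m * c ^ m"
  define d :: real where "d = of_int a ^ (2 * m)"
  have "d > 0"
    using \<open>a \<noteq> 0\<close> by (simp add: d_def power_mult)
  have A: "of_int A = d" and B: "of_int B = - d * (x ^ m + y ^ m)" and C: "of_int C = d * (x ^ m * y ^ m)"
    by (simp_all add: A_def B_def C_def d_def S c power_mult_distrib mult_2 power_add)
  have "of_int (A + B) = d * (1 - x ^ m - y ^ m)" and "of_int (A + B + C) = d * ((1 - x ^ m) * (1 - y ^ m))"
    unfolding of_int_add A B C by (simp_all add: algebra_simps)
  moreover have "d * (1 - x ^ m - y ^ m) \<ge> 0" and "d * ((1 - x ^ m) * (1 - y ^ m)) \<ge> 0"
    using \<open>d > 0\<close> \<open>x ^ m < 1\<close> \<open>y ^ m < 1\<close> \<open>x ^ m + y ^ m \<le> 1\<close> by simp_all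
  ultimately have "A + B \<ge> 0" and "A + B + C \<ge> 0"
    by (simp_all only: flip: of_int_0_le_iff)
  moreover have "A > 0"
    using \<open>d > 0\<close> A by linarith
  moreover have "of_int C + of_int B * x ^ m + of_int A * (x ^ m)^2 = 0"
    unfolding A B C by (simp add: algebra_simps power2_eq_square)
  ultimately show ?thesis
    using infinite_representations_of_quadratic_root_power \<open>m \<ge> 1\<close> that by blast
qed

theorem theorem1:
  fixes p :: "int poly" and \<beta> \<beta>' :: real
  assumes "degree p = 2" and "irreducible p"
    and "poly (map_poly of_int p) \<beta> = 0"
    and "poly (map_poly of_int p) \<beta>' = 0" and "\<beta>' \<noteq> \<beta>"
  shows "(\<forall>\<alpha>::real. partition_fn (of_real \<beta>) (of_real \<alpha>) < \<infinity>) \<longleftrightarrow> (\<beta> > 1 \<or> \<beta>' > 1)"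
proof -
  have irrational: "\<beta> \<notin> \<rat>" "\<beta>' \<notin> \<rat>"
    using irreducible_quadratic_root_not_rational assms(1-4) by blast+
  have "coeff p 2 \<noteq> 0"
    using assms(1) leading_coeff_0_iff[of p] by fastforce
  then have "\<exists>\<alpha>. infinite (representations \<beta> \<alpha>)" if "\<beta> < 1" and "\<beta>' < 1"
    using infinite_representations_if_conjugates_lt_1 quadratic_vieta[OF assms(1,3,4) assms(5)[symmetric]] that
    by blast
  moreover have "finite (representations \<beta> \<alpha>)" if "\<beta> > 1 \<or> \<beta>' > 1" for \<alpha>
    using that finite_representations finite_representations_of_conjugate[OF assms(1) irrational(1) assms(3,4)]
    by blast
  moreover have "\<beta> \<noteq> 1" and "\<beta>' \<noteq> 1"
    using irrational by auto
  then have "\<beta> > 1 \<or> \<beta>' > 1 \<longleftrightarrow> \<not> (\<beta> < 1 \<and> \<beta>' < 1)"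
    by auto
  moreover have "partition_fn (of_real \<beta>) (of_real \<alpha>) < \<infinity> \<longleftrightarrow> finite (representations \<beta> \<alpha>)" for \<alpha>
    by (simp add: partition_fn_def partition_polys_of_real)
  ultimately show ?thesis
    by blast
qed

end
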